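(* Let $K,L,T$ be positive integers and $\lambda=\min\{K,L\}+T$. Let indices range over $r\in\{1,\ldots,K+T\}$, $c\in\{1,\ldots,L+T\}$, $e\in\mathbb{Z}_{\ge0}$. Then $\operatorname{N}(K,L,T)$ equals the optimal value of the binary linear program in the variables $U_e,R_{r,e},C_{c,e},M_{r,c,e}\in\{0,1\}$: minimize $\sum_e U_e$ subject to $M_{r,c,e}\le U_e$ for all $r,c,e$; $\sum_{(r,c)\neq(r',c')}M_{r,c,e}\le\lambda(1-M_{r',c',e})$ for all $e$, all $r'\le K$, $c'\le L$; $\sum_r R_{r,e}\le 1$ for all $e$; $\sum_c C_{c,e}\le1$ for all $e$; $\sum_e M_{r,c,e}=1$ for all $r,c$; $\sum_e R_{r,e}=1$ for all $r$; $\sum_e C_{c,e}=1$ for all $c$; $\sum_e e\,M_{r,c,e}=\sum_e e\,R_{r,e}+\sum_e e\,C_{c,e}$ for all $r,c$.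
   Context: A degree table with parameters $K,L,T$ is a tuple $(\alpha_{\mathrm p},\alpha_{\mathrm s},\beta_{\mathrm p},\beta_{\mathrm s})$ of nonnegative integer vectors of lengths $K,T,L,T$ such that, with $\alpha=(\alpha_{\mathrm p}\mid\alpha_{\mathrm s})$ (length $K+T$) and $\beta=(\beta_{\mathrm p}\mid\beta_{\mathrm s})$ (length $L+T$): (i) entries of $\alpha$ are distinct; (ii) entries of $\beta$ are distinct; (iii) for every integer $n\in\operatorname{Set}(\alpha_{\mathrm p})+\operatorname{Set}(\beta_{\mathrm p})$ there is a unique $i\in\operatorname{Set}(\alpha)$ and unique $j\in\operatorname{Set}(\beta)$ with $n=i+j$. $\operatorname{Set}(v)$ is the set of entries of $v$, $A+B=\{a+b\}$, $\operatorname{N}(\alpha,\beta)=|\operatorname{Set}(\alpha)+\operatorname{Set}(\beta)|$, and $\operatorname{N}(K,L,T)$ is the minimum of $\operatorname{N}(\alpha,\beta)$ over all degree tables with parameters $K,L,T$. *)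

theory Defs
  imports "HOL-Analysis.Analysis"
begin

definition sumset :: "nat set \<Rightarrow> nat set \<Rightarrow> nat set" where
  "sumset A B = {a + b | a b. a \<in> A \<and> b \<in> B}"

definition degree_table ::
  "nat \<Rightarrow> nat \<Rightarrow> nat \<Rightarrow> nat list \<Rightarrow> nat list \<Rightarrow> nat list \<Rightarrow> nat list \<Rightarrow> bool" where
  "degree_table K L T ap as bp bs \<longleftrightarrow>
     length ap = K \<and> length as = T \<and> length bp = L \<and> length bs = T \<and>
     distinct (ap @ as) \<and> distinct (bp @ bs) \<and>
     (\<forall>n \<in> sumset (set ap) (set bp).
        \<exists>!p. p \<in> set (ap @ as) \<times> set (bp @ bs) \<and> fst p + snd p = n)"

definition Nval :: "nat list \<Rightarrow> nat list \<Rightarrow> nat" where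
  "Nval \<alpha> \<beta> = card (sumset (set \<alpha>) (set \<beta>))"

definition NKLT :: "nat \<Rightarrow> nat \<Rightarrow> nat \<Rightarrow> nat" where
  "NKLT K L T = Inf {Nval (ap @ as) (bp @ bs) | ap as bp bs. degree_table K L T ap as bp bs}"

text \<open>Infinite sums over e are taken in ennreal (always defined).\<close>
definition blp_feasible ::
  "nat \<Rightarrow> nat \<Rightarrow> nat \<Rightarrow> (nat \<Rightarrow> nat) \<Rightarrow> (nat \<Rightarrow> nat \<Rightarrow> nat) \<Rightarrow> (nat \<Rightarrow> nat \<Rightarrow> nat)
     \<Rightarrow> (nat \<Rightarrow> nat \<Rightarrow> nat \<Rightarrow> nat) \<Rightarrow> bool" where
  "blp_feasible K L T U R C M \<longleftrightarrow>
     (let lam = min K L + T; Rs = {1..K+T}; Cs = {1..L+T} in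
     (\<forall>e. U e \<in> {0,1}) \<and>
     (\<forall>r e. R r e \<in> {0,1}) \<and> (\<forall>c e. C c e \<in> {0,1}) \<and> (\<forall>r c e. M r c e \<in> {0,1}) \<and>
     (\<forall>r\<in>Rs. \<forall>c\<in>Cs. \<forall>e. M r c e \<le> U e) \<and>
     (\<forall>e. \<forall>r'\<in>{1..K}. \<forall>c'\<in>{1..L}.
        int (\<Sum>(r,c) \<in> (Rs \<times> Cs) - {(r',c')}. M r c e) \<le> int lam * (1 - int (M r' c' e))) \<and>
     (\<forall>e. (\<Sum>r\<in>Rs. R r e) \<le> 1) \<and>
     (\<forall>e. (\<Sum>c\<in>Cs. C c e) \<le> 1) \<and>
     (\<forall>r\<in>Rs. \<forall>c\<in>Cs. (\<Sum>e. ennreal (of_nat (M r c e))) = 1) \<and>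
     (\<forall>r\<in>Rs. (\<Sum>e. ennreal (of_nat (R r e))) = 1) \<and>
     (\<forall>c\<in>Cs. (\<Sum>e. ennreal (of_nat (C c e))) = 1) \<and>
     (\<forall>r\<in>Rs. \<forall>c\<in>Cs.
        (\<Sum>e. ennreal (of_nat (e * M r c e))) =
        (\<Sum>e. ennreal (of_nat (e * R r e))) + (\<Sum>e. ennreal (of_nat (e * C c e)))))"

definition blp_objective :: "(nat \<Rightarrow> nat) \<Rightarrow> ennreal" where
  "blp_objective U = (\<Sum>e. ennreal (of_nat (U e)))"

definition blp_value :: "nat \<Rightarrow> nat \<Rightarrow> nat \<Rightarrow> ennreal" where
  "blp_value K L T = Inf {blp_objective U | U R C M. blp_feasible K L T U R C M}"

end

(* A degree table is the same thing as a pair of injective index maps a (rows) and b (columns)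
   under which every sum a r' + b c' with r' <= K, c' <= L is hit by no other cell (r, c).
   A feasible point of the program is the one-hot encoding of such a pair: R r and C c put
   their single 1 at a r and b c, the degree equation then puts the single 1 of M r c at
   a r + b c, the packing constraints on R and C say that a and b are injective, and the
   lambda-constraint says that a cell (r', c') with r' <= K, c' <= L shares its degree with no
   other cell (lambda = min K L + T is the largest number of cells two injective maps can send
   to one degree).  The objective dominates the number of occupied degrees
   |Set alpha + Set beta|, with equality for the indicator of the sumset, so both minima agree. *)

theory Submission
  imports Defs
begin

text \<open>Index-function form of a degree table: \<open>a r\<close> is the \<open>r\<close>-th entry of \<open>\<alpha>\<close> and \<open>b c\<close>
  the \<open>c\<close>-th entry of \<open>\<beta>\<close>, indexed from 1 as in the program.\<close>

definition degree_table_fun :: "nat \<Rightarrow> nat \<Rightarrow> nat \<Rightarrow> (nat \<Rightarrow> nat) \<Rightarrow> (nat \<Rightarrow> nat) \<Rightarrow> bool" where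
  "degree_table_fun K L T a b \<longleftrightarrow> inj_on a {1..K+T} \<and> inj_on b {1..L+T} \<and>
    (\<forall>r'\<in>{1..K}. \<forall>c'\<in>{1..L}. \<forall>r\<in>{1..K+T}. \<forall>c\<in>{1..L+T}.
       a r + b c = a r' + b c' \<longrightarrow> r = r' \<and> c = c')"

lemma sumset_eq_image: "sumset A B = (\<lambda>(x, y). x + y) ` (A \<times> B)"
  by (auto simp: sumset_def)

lemma finite_sumset: "finite A \<Longrightarrow> finite B \<Longrightarrow> finite (sumset A B)"
  by (simp add: sumset_eq_image)

lemma unique_sums_iff_unique_indices:
  assumes "inj_on a A" "inj_on b B" "A' \<subseteq> A" "B' \<subseteq> B"
  shows "(\<forall>n \<in> sumset (a ` A') (b ` B'). \<exists>!p. p \<in> a ` A \<times> b ` B \<and> fst p + snd p = n) \<longleftrightarrow>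
    (\<forall>r'\<in>A'. \<forall>c'\<in>B'. \<forall>r\<in>A. \<forall>c\<in>B. a r + b c = a r' + b c' \<longrightarrow> r = r' \<and> c = c')"
proof
  assume uniq: "\<forall>n \<in> sumset (a ` A') (b ` B'). \<exists>!p. p \<in> a ` A \<times> b ` B \<and> fst p + snd p = n"
  show "\<forall>r'\<in>A'. \<forall>c'\<in>B'. \<forall>r\<in>A. \<forall>c\<in>B. a r + b c = a r' + b c' \<longrightarrow> r = r' \<and> c = c'"
  proof (intro ballI impI)
    fix r' c' r c
    assume idx: "r' \<in> A'" "c' \<in> B'" "r \<in> A" "c \<in> B" and eq: "a r + b c = a r' + b c'"
    have "a r' + b c' \<in> sumset (a ` A') (b ` B')"
      using idx by (auto simp: sumset_def)
    with uniq have "\<exists>!p. p \<in> a ` A \<times> b ` B \<and> fst p + snd p = a r' + b c'" ..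
    moreover have "(a r, b c) \<in> a ` A \<times> b ` B" "(a r', b c') \<in> a ` A \<times> b ` B"
      using idx assms(3,4) by auto
    ultimately have "(a r, b c) = (a r', b c')"
      using eq by (metis fst_conv snd_conv)
    then show "r = r' \<and> c = c'"
      using idx assms(1-4) by (auto dest: inj_onD)
  qed
next
  assume uniq: "\<forall>r'\<in>A'. \<forall>c'\<in>B'. \<forall>r\<in>A. \<forall>c\<in>B. a r + b c = a r' + b c' \<longrightarrow> r = r' \<and> c = c'"
  show "\<forall>n \<in> sumset (a ` A') (b ` B'). \<exists>!p. p \<in> a ` A \<times> b ` B \<and> fst p + snd p = n"
  proof
    fix n assume "n \<in> sumset (a ` A') (b ` B')"
    then obtain r' c' where idx: "r' \<in> A'" "c' \<in> B'" and n: "n = a r' + b c'"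
      by (auto simp: sumset_def)
    show "\<exists>!p. p \<in> a ` A \<times> b ` B \<and> fst p + snd p = n"
    proof (rule ex1I)
      show "(a r', b c') \<in> a ` A \<times> b ` B \<and> fst (a r', b c') + snd (a r', b c') = n"
        using idx assms(3,4) n by auto
    next
      fix p assume "p \<in> a ` A \<times> b ` B \<and> fst p + snd p = n"
      then obtain r c where "r \<in> A" "c \<in> B" "p = (a r, b c)" "a r + b c = a r' + b c'"
        using n by auto
      with uniq idx show "p = (a r', b c')"
        by blast
    qed
  qed
qed

lemma map_upt_append:
  "map f [1..<m+1] @ map f [m+1..<m+n+1] = map f [1..<m+n+1]"
  using upt_add_eq_append[of 1 "m+1" n] by (simp add: ac_simps)

lemma set_map_upt: "set (map f [1..<n+1]) = f ` {1..n}"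
  by auto

lemma distinct_map_upt_iff: "distinct (map f [1..<n+1]) \<longleftrightarrow> inj_on f {1..n}"
proof -
  have "set [1..<n+1] = {1..n}"
    by auto
  then show ?thesis
    by (simp add: distinct_map)
qed

lemma degree_table_map_iff:
  "degree_table K L T (map a [1..<K+1]) (map a [K+1..<K+T+1]) (map b [1..<L+1]) (map b [L+1..<L+T+1])
   \<longleftrightarrow> degree_table_fun K L T a b"
proof (cases "inj_on a {1..K+T} \<and> inj_on b {1..L+T}")
  case True
  then have "(\<forall>n \<in> sumset (a ` {1..K}) (b ` {1..L}).
      \<exists>!p. p \<in> a ` {1..K+T} \<times> b ` {1..L+T} \<and> fst p + snd p = n) \<longleftrightarrow>
    (\<forall>r'\<in>{1..K}. \<forall>c'\<in>{1..L}. \<forall>r\<in>{1..K+T}. \<forall>c\<in>{1..L+T}.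
      a r + b c = a r' + b c' \<longrightarrow> r = r' \<and> c = c')"
    by (intro unique_sums_iff_unique_indices) auto
  with True show ?thesis
    unfolding degree_table_def degree_table_fun_def map_upt_append set_map_upt distinct_map_upt_iff
    by simp
next
  case False
  then show ?thesis
    unfolding degree_table_def degree_table_fun_def map_upt_append distinct_map_upt_iff
    by blast
qed

lemma append_eq_map_nth_upt:
  assumes "length xs = m" "length ys = n"
  shows "xs = map (\<lambda>i. (xs @ ys) ! (i - 1)) [1..<m+1]"
    and "ys = map (\<lambda>i. (xs @ ys) ! (i - 1)) [m+1..<m+n+1]"
  by (rule nth_equalityI; simp add: assms nth_append del: upt_Suc)+

lemma Nval_map_upt:
  "Nval (map a [1..<K+1] @ map a [K+1..<K+T+1]) (map b [1..<L+1] @ map b [L+1..<L+T+1])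
   = card (sumset (a ` {1..K+T}) (b ` {1..L+T}))"
  by (simp only: Nval_def map_upt_append set_map_upt)

lemma NKLT_eq_Inf_degree_table_fun:
  "NKLT K L T = Inf {card (sumset (a ` {1..K+T}) (b ` {1..L+T})) | a b. degree_table_fun K L T a b}"
proof -
  have "{Nval (ap @ as) (bp @ bs) | ap as bp bs. degree_table K L T ap as bp bs}
      = {card (sumset (a ` {1..K+T}) (b ` {1..L+T})) | a b. degree_table_fun K L T a b}"
  proof (intro equalityI subsetI)
    fix x assume "x \<in> {Nval (ap @ as) (bp @ bs) | ap as bp bs. degree_table K L T ap as bp bs}"
    then obtain ap as bp bs where x: "x = Nval (ap @ as) (bp @ bs)"
      and table: "degree_table K L T ap as bp bs"
      by blast
    define a where "a = (\<lambda>i. (ap @ as) ! (i - 1))"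
    define b where "b = (\<lambda>i. (bp @ bs) ! (i - 1))"
    have "ap = map a [1..<K+1]" "as = map a [K+1..<K+T+1]"
         "bp = map b [1..<L+1]" "bs = map b [L+1..<L+T+1]"
      using table append_eq_map_nth_upt unfolding degree_table_def a_def b_def by blast+
    with table x have "degree_table_fun K L T a b" "x = card (sumset (a ` {1..K+T}) (b ` {1..L+T}))"
      by (simp_all only: degree_table_map_iff Nval_map_upt)
    then show "x \<in> {card (sumset (a ` {1..K+T}) (b ` {1..L+T})) | a b. degree_table_fun K L T a b}"
      by blast
  next
    fix x assume "x \<in> {card (sumset (a ` {1..K+T}) (b ` {1..L+T})) | a b. degree_table_fun K L T a b}"
    then obtain a b where "x = card (sumset (a ` {1..K+T}) (b ` {1..L+T}))" "degree_table_fun K L T a b"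
      by blast
    then show "x \<in> {Nval (ap @ as) (bp @ bs) | ap as bp bs. degree_table K L T ap as bp bs}"
      unfolding Nval_map_upt[symmetric] degree_table_map_iff[symmetric] by blast
  qed
  then show ?thesis
    unfolding NKLT_def by simp
qed

lemma degree_table_fun_exists: "degree_table_fun K L T (\<lambda>r. r) (\<lambda>c. c * (K + T + 1))"
proof -
  define N where "N = K + T + 1"
  have N: "N \<noteq> 0"
    by (simp add: N_def)
  have "r = r' \<and> c = c'"
    if "r' \<in> {1..K}" "r \<in> {1..K+T}" and eq: "r + c * N = r' + c' * N" for r r' c c' :: nat
  proof -
    have "r mod N = r' mod N"
      using arg_cong[OF eq, of "\<lambda>x. x mod N"] by simp
    moreover have "r < N" "r' < N"
      using that(1,2) by (simp_all add: N_def)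
    ultimately have "r = r'"
      by simp
    with eq N show ?thesis
      by simp
  qed
  moreover have "inj_on (\<lambda>c. c * N) {1..L+T}"
    using N by (simp add: inj_on_def)
  ultimately show ?thesis
    unfolding N_def[symmetric] degree_table_fun_def using inj_on_id2 by blast
qed

lemma ennreal_of_nat_Inf_eq_Inf:
  fixes G :: "nat set" and B :: "ennreal set"
  assumes "G \<noteq> {}"
    and "\<And>g. g \<in> G \<Longrightarrow> ennreal (of_nat g) \<in> B"
    and "\<And>x. x \<in> B \<Longrightarrow> \<exists>g\<in>G. ennreal (of_nat g) \<le> x"
  shows "ennreal (of_nat (Inf G)) = Inf B"
proof (rule antisym)
  show "ennreal (of_nat (Inf G)) \<le> Inf B"
  proof (rule Inf_greatest)
    fix x assume "x \<in> B"
    then obtain g where g: "g \<in> G" "ennreal (of_nat g) \<le> x"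
      using assms(3) by blast
    have "Inf G \<le> g"
      using g(1) by (rule cInf_lower) simp
    then have "ennreal (of_nat (Inf G)) \<le> ennreal (of_nat g)"
      by (simp add: ennreal_leI)
    also note g(2)
    finally show "ennreal (of_nat (Inf G)) \<le> x" .
  qed
  show "Inf B \<le> ennreal (of_nat (Inf G))"
    using assms(1,2) by (intro Inf_lower) (simp add: Inf_nat_def1)
qed

lemma suminf_ennreal_single_support:
  fixes f :: "nat \<Rightarrow> nat"
  assumes "\<And>e. e \<noteq> x \<Longrightarrow> f e = 0"
  shows "(\<Sum>e. ennreal (of_nat (f e))) = ennreal (of_nat (f x))"
  using assms by (subst suminf_finite[of "{x}"]) auto

lemma suminf_of_bool_eq [simp]: "(\<Sum>e. ennreal (of_nat (of_bool (x = e)))) = 1"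
  by (subst suminf_ennreal_single_support[where x = x]) auto

lemma suminf_mult_of_bool_eq [simp]:
  "(\<Sum>e. ennreal (of_nat (e * of_bool (x = e)))) = ennreal (of_nat x)"
  by (subst suminf_ennreal_single_support[where x = x]) auto

lemma zero_one_suminf_eq_1E:
  fixes f :: "nat \<Rightarrow> nat"
  assumes zero_one: "\<And>e. f e \<in> {0, 1}" and sum_eq_1: "(\<Sum>e. ennreal (of_nat (f e))) = 1"
  obtains x where "f = (\<lambda>e. of_bool (x = e))"
proof -
  obtain x where fx: "f x = 1"
  proof (cases "\<exists>x. f x = 1")
    case False
    with zero_one have "f = (\<lambda>_. 0)"
      by blast
    with sum_eq_1 show ?thesis
      by simp
  qed blast
  have "f e = 0" if "e \<noteq> x" for e
  proof (rule ccontr)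
    assume "f e \<noteq> 0"
    with zero_one[of e] have "f e = 1"
      by blast
    with fx that have "(\<Sum>i\<in>{x, e}. ennreal (of_nat (f i))) = 2"
      by auto
    moreover have "(\<Sum>i\<in>{x, e}. ennreal (of_nat (f i))) \<le> (\<Sum>i. ennreal (of_nat (f i)))"
      by (rule sum_le_suminf) auto
    ultimately show False
      using sum_eq_1 by simp
  qed
  with fx have "f = (\<lambda>e. of_bool (x = e))"
    by (auto intro!: ext)
  then show ?thesis ..
qed

lemma inj_on_iff_sum_of_bool_le_1:
  assumes "finite A"
  shows "inj_on f A \<longleftrightarrow> (\<forall>y. (\<Sum>x\<in>A. of_bool (f x = y) :: nat) \<le> 1)"
proof -
  have "(\<Sum>x\<in>A. of_bool (f x = y) :: nat) \<le> 1 \<longleftrightarrow>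
      (\<forall>x1\<in>A. \<forall>x2\<in>A. f x1 = y \<longrightarrow> f x2 = y \<longrightarrow> x1 = x2)" for y
    using assms by (auto simp: sum_of_bool_eq card_le_Suc0_iff_eq)
  then show ?thesis
    unfolding inj_on_def by auto
qed

lemma sum_of_bool_add_eq_le_card:
  fixes a b :: "'i \<Rightarrow> 'v::cancel_semigroup_add"
  assumes "finite A" "finite B" "inj_on a A" "inj_on b B"
  shows "(\<Sum>(r, c)\<in>A \<times> B. of_bool (a r + b c = e) :: nat) \<le> min (card A) (card B)"
proof -
  have rows: "(\<Sum>c\<in>B. of_bool (a r + b c = e) :: nat) \<le> 1" for r
  proof -
    have "inj_on (\<lambda>c. a r + b c) B"
      using assms(4) by (auto simp: inj_on_def)
    with assms(2) show ?thesis
      by (simp add: inj_on_iff_sum_of_bool_le_1)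
  qed
  have columns: "(\<Sum>r\<in>A. of_bool (a r + b c = e) :: nat) \<le> 1" for c
  proof -
    have "inj_on (\<lambda>r. a r + b c) A"
      using assms(3) by (auto simp: inj_on_def)
    with assms(1) show ?thesis
      by (simp add: inj_on_iff_sum_of_bool_le_1)
  qed
  have "(\<Sum>(r, c)\<in>A \<times> B. of_bool (a r + b c = e) :: nat) = (\<Sum>r\<in>A. \<Sum>c\<in>B. of_bool (a r + b c = e))"
    by (simp add: sum.cartesian_product')
  also have "\<dots> = (\<Sum>c\<in>B. \<Sum>r\<in>A. of_bool (a r + b c = e))"
    by (rule sum.swap)
  moreover have "(\<Sum>r\<in>A. \<Sum>c\<in>B. of_bool (a r + b c = e) :: nat) \<le> card A"
    using sum_mono[of A, OF rows] by simp
  moreover have "(\<Sum>c\<in>B. \<Sum>r\<in>A. of_bool (a r + b c = e) :: nat) \<le> card B"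
    using sum_mono[of B, OF columns] by simp
  ultimately show ?thesis
    by simp
qed

lemma inj_on_if_one_hot_sum_le_1:
  assumes "\<And>x. x \<in> A \<Longrightarrow> R x = (\<lambda>y. of_bool (f x = y))"
    and "\<And>y. (\<Sum>x\<in>A. R x y :: nat) \<le> 1"
    and "finite A"
  shows "inj_on f A"
  unfolding inj_on_iff_sum_of_bool_le_1[OF assms(3)]
proof
  fix y
  have "(\<Sum>x\<in>A. of_bool (f x = y) :: nat) = (\<Sum>x\<in>A. R x y)"
    by (rule sum.cong) (simp_all add: assms(1))
  with assms(2)[of y] show "(\<Sum>x\<in>A. of_bool (f x = y) :: nat) \<le> 1"
    by (simp only:)
qed

lemma blp_objective_of_bool:
  assumes "finite S"
  shows "blp_objective (\<lambda>e. of_bool (e \<in> S)) = ennreal (of_nat (card S))"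
  unfolding blp_objective_def using assms
  by (subst suminf_finite[of S]) (auto simp: ennreal_of_nat_eq_real_of_nat)

lemma card_le_blp_objective:
  assumes "finite S" and "\<And>e. e \<in> S \<Longrightarrow> 1 \<le> U e"
  shows "ennreal (of_nat (card S)) \<le> blp_objective U"
proof -
  have "ennreal (of_nat (card S)) = (\<Sum>e\<in>S. 1)"
    by (simp add: ennreal_of_nat_eq_real_of_nat)
  also have "\<dots> \<le> (\<Sum>e\<in>S. ennreal (of_nat (U e)))"
    using assms(2) by (intro sum_mono) (simp add: ennreal_leI)
  also have "\<dots> \<le> blp_objective U"
    unfolding blp_objective_def using assms(1) by (rule sum_le_suminf[OF summableI]) auto
  finally show ?thesis .
qed

lemma blp_feasible_degree_table_fun:
  assumes "degree_table_fun K L T a b"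
  shows "blp_feasible K L T (\<lambda>e. of_bool (e \<in> sumset (a ` {1..K+T}) (b ` {1..L+T})))
    (\<lambda>r e. of_bool (a r = e)) (\<lambda>c e. of_bool (b c = e)) (\<lambda>r c e. of_bool (a r + b c = e))"
proof -
  let ?A = "{1..K+T}" and ?B = "{1..L+T}"
  have inj: "inj_on a ?A" "inj_on b ?B"
    and uniq: "\<And>r' c' r c. r' \<in> {1..K} \<Longrightarrow> c' \<in> {1..L} \<Longrightarrow> r \<in> ?A \<Longrightarrow> c \<in> ?B \<Longrightarrow>
      a r + b c = a r' + b c' \<Longrightarrow> r = r' \<and> c = c'"
    using assms unfolding degree_table_fun_def by blast+
  have crowding: "int (\<Sum>(r, c)\<in>?A \<times> ?B - {(r', c')}. of_bool (a r + b c = e))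
      \<le> int (min K L + T) * (1 - int (of_bool (a r' + b c' = e)))"
    if "r' \<in> {1..K}" "c' \<in> {1..L}" for r' c' e
  proof (cases "a r' + b c' = e")
    case True
    with uniq that have "(\<Sum>(r, c)\<in>?A \<times> ?B - {(r', c')}. of_bool (a r + b c = e) :: nat) = 0"
      by (intro sum.neutral) auto
    with True show ?thesis
      by simp
  next
    case False
    have "(\<Sum>(r, c)\<in>?A \<times> ?B - {(r', c')}. of_bool (a r + b c = e) :: nat)
        \<le> (\<Sum>(r, c)\<in>?A \<times> ?B. of_bool (a r + b c = e))"
      by (rule sum_mono2) auto
    also have "\<dots> \<le> min (card ?A) (card ?B)"
      using inj by (intro sum_of_bool_add_eq_le_card) auto
    also have "\<dots> = min K L + T"
      by simp
    finally show ?thesis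
      using False by (simp del: of_nat_sum)
  qed
  have rows: "(\<Sum>r\<in>?A. of_bool (a r = e) :: nat) \<le> 1"
    and columns: "(\<Sum>c\<in>?B. of_bool (b c = e) :: nat) \<le> 1" for e
    using inj by (simp_all add: inj_on_iff_sum_of_bool_le_1)
  have below_U: "of_bool (a r + b c = e) \<le> (of_bool (e \<in> sumset (a ` ?A) (b ` ?B)) :: nat)"
    if "r \<in> ?A" "c \<in> ?B" for r c e
  proof -
    have "a r + b c \<in> sumset (a ` ?A) (b ` ?B)"
      using that unfolding sumset_def by blast
    then show ?thesis
      by auto
  qed
  show ?thesis
    unfolding blp_feasible_def Let_def suminf_of_bool_eq suminf_mult_of_bool_eq
    by (intro conjI allI ballI) (rule crowding below_U rows columns; assumption | simp)+
qed

lemma blp_feasible_decode: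
  assumes "blp_feasible K L T U R C M"
  obtains a b where "\<And>r. r \<in> {1..K+T} \<Longrightarrow> R r = (\<lambda>e. of_bool (a r = e))"
    and "\<And>c. c \<in> {1..L+T} \<Longrightarrow> C c = (\<lambda>e. of_bool (b c = e))"
    and "\<And>r c. r \<in> {1..K+T} \<Longrightarrow> c \<in> {1..L+T} \<Longrightarrow> M r c = (\<lambda>e. of_bool (a r + b c = e))"
proof -
  let ?A = "{1..K+T}" and ?B = "{1..L+T}"
  note feasible = assms[unfolded blp_feasible_def Let_def]
  have R01: "\<And>r e. R r e \<in> {0, 1}"
    using feasible by - (elim conjE, blast)
  have C01: "\<And>c e. C c e \<in> {0, 1}"
    using feasible by - (elim conjE, blast)
  have M01: "\<And>r c e. M r c e \<in> {0, 1}"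
    using feasible by - (elim conjE, blast)
  have Rsums: "\<And>r. r \<in> ?A \<Longrightarrow> (\<Sum>e. ennreal (of_nat (R r e))) = 1"
    using feasible by - (elim conjE, blast)
  have Csums: "\<And>c. c \<in> ?B \<Longrightarrow> (\<Sum>e. ennreal (of_nat (C c e))) = 1"
    using feasible by - (elim conjE, blast)
  have Msums: "\<And>r c. r \<in> ?A \<Longrightarrow> c \<in> ?B \<Longrightarrow> (\<Sum>e. ennreal (of_nat (M r c e))) = 1"
    using feasible by - (elim conjE, blast)
  have degrees: "(\<Sum>e. ennreal (of_nat (e * M r c e))) =
      (\<Sum>e. ennreal (of_nat (e * R r e))) + (\<Sum>e. ennreal (of_nat (e * C c e)))"
    if "r \<in> ?A" "c \<in> ?B" for r c
    using feasible that by blast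
  have "\<forall>r\<in>?A. \<exists>x. R r = (\<lambda>e. of_bool (x = e))"
    using R01 Rsums zero_one_suminf_eq_1E by metis
  then obtain a where a: "\<And>r. r \<in> ?A \<Longrightarrow> R r = (\<lambda>e. of_bool (a r = e))"
    by metis
  have "\<forall>c\<in>?B. \<exists>x. C c = (\<lambda>e. of_bool (x = e))"
    using C01 Csums zero_one_suminf_eq_1E by metis
  then obtain b where b: "\<And>c. c \<in> ?B \<Longrightarrow> C c = (\<lambda>e. of_bool (b c = e))"
    by metis
  have M: "M r c = (\<lambda>e. of_bool (a r + b c = e))" if rc: "r \<in> ?A" "c \<in> ?B" for r c
  proof -
    obtain x where x: "M r c = (\<lambda>e. of_bool (x = e))"
      using M01 Msums[OF rc] by (rule zero_one_suminf_eq_1E)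
    have "ennreal (of_nat x) = ennreal (of_nat (a r)) + ennreal (of_nat (b c))"
      using degrees[OF rc] unfolding x a[OF rc(1)] b[OF rc(2)] suminf_mult_of_bool_eq .
    also have "\<dots> = ennreal (of_nat (a r + b c))"
      by simp
    finally have "x = a r + b c"
      by (simp only: ennreal_of_nat_eq_real_of_nat[symmetric] of_nat_eq_iff)
    with x show ?thesis
      by simp
  qed
  with a b show ?thesis
    by (rule that)
qed

lemma blp_feasible_imp_degree_table_fun:
  assumes "blp_feasible K L T U R C M"
  obtains a b where "degree_table_fun K L T a b"
    and "ennreal (of_nat (card (sumset (a ` {1..K+T}) (b ` {1..L+T})))) \<le> blp_objective U"
proof -
  let ?A = "{1..K+T}" and ?B = "{1..L+T}"
  obtain a b where a: "\<And>r. r \<in> ?A \<Longrightarrow> R r = (\<lambda>e. of_bool (a r = e))"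
    and b: "\<And>c. c \<in> ?B \<Longrightarrow> C c = (\<lambda>e. of_bool (b c = e))"
    and M: "\<And>r c. r \<in> ?A \<Longrightarrow> c \<in> ?B \<Longrightarrow> M r c = (\<lambda>e. of_bool (a r + b c = e))"
    using blp_feasible_decode[OF assms] by metis
  note feasible = assms[unfolded blp_feasible_def Let_def]
  have MU: "M r c e \<le> U e" if "r \<in> ?A" "c \<in> ?B" for r c e
    using feasible that by blast
  have crowding: "int (\<Sum>(r, c)\<in>?A \<times> ?B - {(r', c')}. M r c e)
      \<le> int (min K L + T) * (1 - int (M r' c' e))"
    if "r' \<in> {1..K}" "c' \<in> {1..L}" for e r' c'
    using feasible that by blast
  have Rsum: "\<And>e. (\<Sum>r\<in>?A. R r e) \<le> 1"
    using feasible by - (elim conjE, blast)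
  have Csum: "\<And>e. (\<Sum>c\<in>?B. C c e) \<le> 1"
    using feasible by - (elim conjE, blast)
  have "inj_on a ?A"
    using a Rsum finite_atLeastAtMost by (rule inj_on_if_one_hot_sum_le_1)
  moreover have "inj_on b ?B"
    using b Csum finite_atLeastAtMost by (rule inj_on_if_one_hot_sum_le_1)
  moreover have "r = r' \<and> c = c'"
    if idx: "r' \<in> {1..K}" "c' \<in> {1..L}" "r \<in> ?A" "c \<in> ?B" and eq: "a r + b c = a r' + b c'"
    for r' c' r c
  proof (rule ccontr)
    assume ne: "\<not> (r = r' \<and> c = c')"
    have "M r' c' (a r' + b c') = 1"
      using idx(1,2) by (simp add: M)
    with crowding[OF idx(1,2), of "a r' + b c'"]
    have "(\<Sum>(r, c)\<in>?A \<times> ?B - {(r', c')}. M r c (a r' + b c')) = 0"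
      by (simp del: of_nat_sum)
    moreover have "(r, c) \<in> ?A \<times> ?B - {(r', c')}"
      using idx ne by auto
    ultimately have "M r c (a r' + b c') = 0"
      by (force simp: sum_eq_0_iff)
    with idx eq show False
      by (simp add: M)
  qed
  ultimately have "degree_table_fun K L T a b"
    unfolding degree_table_fun_def by blast
  moreover have "ennreal (of_nat (card (sumset (a ` ?A) (b ` ?B)))) \<le> blp_objective U"
  proof (rule card_le_blp_objective)
    show "finite (sumset (a ` ?A) (b ` ?B))"
      by (simp add: finite_sumset)
  next
    fix e assume "e \<in> sumset (a ` ?A) (b ` ?B)"
    then obtain r c where "r \<in> ?A" "c \<in> ?B" "e = a r + b c"
      by (auto simp: sumset_def)
    then show "1 \<le> U e"
      using MU[of r c e] by (simp add: M)
  qed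
  ultimately show ?thesis
    by (rule that)
qed

theorem theorem9:
  fixes K L T :: nat
  assumes "K > 0" and "L > 0" and "T > 0"
  shows "ennreal (of_nat (NKLT K L T)) = blp_value K L T"
  unfolding NKLT_eq_Inf_degree_table_fun blp_value_def
proof (rule ennreal_of_nat_Inf_eq_Inf)
  show "{card (sumset (a ` {1..K+T}) (b ` {1..L+T})) | a b. degree_table_fun K L T a b} \<noteq> {}"
    using degree_table_fun_exists by blast
next
  fix g assume "g \<in> {card (sumset (a ` {1..K+T}) (b ` {1..L+T})) | a b. degree_table_fun K L T a b}"
  then obtain a b where table: "degree_table_fun K L T a b"
    and g: "g = card (sumset (a ` {1..K+T}) (b ` {1..L+T}))"
    by blast
  have "blp_objective (\<lambda>e. of_bool (e \<in> sumset (a ` {1..K+T}) (b ` {1..L+T}))) = ennreal (of_nat g)"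
    unfolding g by (simp add: blp_objective_of_bool finite_sumset)
  with blp_feasible_degree_table_fun[OF table]
  show "ennreal (of_nat g) \<in> {blp_objective U | U R C M. blp_feasible K L T U R C M}"
    by force
next
  fix x assume "x \<in> {blp_objective U | U R C M. blp_feasible K L T U R C M}"
  then obtain U R C M where x: "x = blp_objective U" and feasible: "blp_feasible K L T U R C M"
    by blast
  obtain a b where "degree_table_fun K L T a b"
    and "ennreal (of_nat (card (sumset (a ` {1..K+T}) (b ` {1..L+T})))) \<le> blp_objective U"
    using feasible by (rule blp_feasible_imp_degree_table_fun)
  with x show "\<exists>g \<in> {card (sumset (a ` {1..K+T}) (b ` {1..L+T})) | a b. degree_table_fun K L T a b}.
      ennreal (of_nat g) \<le> x"
    by blast
qed

end
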